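(* For every $p\in(1,\infty)$ there are constants $0<c_1\le c_2<\infty$ depending only on $p$ such that for every integer $h\ge2$, $$c_1\log(h)^{1/p}\le c_{\ell_p}(T^\omega_h)\le c_2\log(h)^{1/p}.$$
   Context: For a positive integer $h$, $T^\omega_h$ is the complete countably branching rooted tree of height $h$: every vertex at distance $<h$ from the root has countably infinitely many children, and vertices at distance $h$ from the root are leaves; it carries the unweighted shortest-path metric. $c_Y(M):=\inf\{\mathrm{Lip}(f)\mathrm{Lip}(f^{-1}): f\colon M\to Y\text{ injective}\}$. *)

theory Defs
  imports "HOL-Analysis.Analysis"
begin

definition Lip :: "'a set \<Rightarrow> ('a \<Rightarrow> 'a \<Rightarrow> real) \<Rightarrow> ('b \<Rightarrow> 'b \<Rightarrow> real) \<Rightarrow> ('a \<Rightarrow> 'b) \<Rightarrow> ereal" where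
  "Lip A dA dB f = (SUP uv \<in> {(u,v). u \<in> A \<and> v \<in> A \<and> u \<noteq> v}.
      ereal (dB (f (fst uv)) (f (snd uv)) / dA (fst uv) (snd uv)))"

definition Lip_inv :: "'a set \<Rightarrow> ('a \<Rightarrow> 'a \<Rightarrow> real) \<Rightarrow> ('b \<Rightarrow> 'b \<Rightarrow> real) \<Rightarrow> ('a \<Rightarrow> 'b) \<Rightarrow> ereal" where
  "Lip_inv A dA dB f = (SUP uv \<in> {(u,v). u \<in> A \<and> v \<in> A \<and> u \<noteq> v}.
      ereal (dA (fst uv) (snd uv) / dB (f (fst uv)) (f (snd uv))))"

definition distortion :: "'a set \<Rightarrow> ('a \<Rightarrow> 'a \<Rightarrow> real) \<Rightarrow> 'b set \<Rightarrow> ('b \<Rightarrow> 'b \<Rightarrow> real) \<Rightarrow> ereal" where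
  "distortion M dM Y dY = (INF f \<in> {f. inj_on f M \<and> f ` M \<subseteq> Y}. Lip M dM dY f * Lip_inv M dM dY f)"

definition lp_space :: "real \<Rightarrow> (nat \<Rightarrow> real) set" where
  "lp_space p = {x. summable (\<lambda>i. \<bar>x i\<bar> powr p)}"

definition lp_dist :: "real \<Rightarrow> (nat \<Rightarrow> real) \<Rightarrow> (nat \<Rightarrow> real) \<Rightarrow> real" where
  "lp_dist p x y = (\<Sum>i. \<bar>x i - y i\<bar> powr p) powr (1 / p)"

text \<open>Complete countably branching tree of height h: vertices are lists of naturals
  of length at most h (root = [], children of xs are xs @ [n]); shortest-path metric
  is |xs| + |ys| - 2 |longest common prefix|.\<close>
definition tree_vertices :: "nat \<Rightarrow> nat list set" where
  "tree_vertices h = {xs. length xs \<le> h}"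

fun lcp :: "nat list \<Rightarrow> nat list \<Rightarrow> nat" where
  "lcp (x # xs) (y # ys) = (if x = y then Suc (lcp xs ys) else 0)"
| "lcp _ _ = 0"

definition tree_dist :: "nat list \<Rightarrow> nat list \<Rightarrow> real" where
  "tree_dist xs ys = real (length xs + length ys - 2 * lcp xs ys)"

end

theory Submission
  imports Defs "HOL-Library.Diagonal_Subsequence" "HOL-Library.Nat_Bijection" "HOL-Library.Discrete_Functions"
begin

text \<open>
  Lower bound (Bourgain; Matousek's fork argument).  Let \<open>p > 1\<close> and
  \<open>\<kappa> = (2\<^bsup>p-1\<^esup> - 1) / 4\<close>.  If \<open>x\<close> and infinitely many \<open>\<sigma>\<close>-separated points \<open>z n\<close> lie
  within \<open>A\<close> of \<open>y\<close>, then some \<open>z n\<close> has \<open>\<parallel>x - z n\<parallel>\<^sup>p \<le> (2 A)\<^sup>p - \<kappa> \<sigma>\<^sup>p\<close>: along a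
  coordinatewise convergent subsequence, \<open>\<parallel>v - z n\<parallel>\<^sup>p\<close> tends to \<open>\<parallel>v - w\<parallel>\<^sup>p + \<mu>\<close> for every
  \<open>v\<close> (Brezis--Lieb), separation forces \<open>\<mu> \<ge> \<sigma>\<^sup>p / 2\<close>, and the triangle inequality through
  \<open>y\<close> bounds \<open>\<parallel>x - w\<parallel>\<close>.  Applying this at every second level, an embedding of the tree of
  height \<open>2 m\<close> with expansion \<open>s\<close> and edge lengths \<open>L\<close> yields one of the tree of height \<open>m\<close>
  with expansion \<open>2 s\<close> and edge lengths \<open>L'\<close>, \<open>L'\<^sup>p \<le> (2 L)\<^sup>p - \<kappa> (2 s)\<^sup>p\<close>.  After
  \<open>log\<^sub>2 h\<close> halvings, \<open>(L / s)\<^sup>p \<ge> 1 + \<kappa> log\<^sub>2 h\<close>.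

  Upper bound (Bourgain's embedding).  A vertex \<open>a\<close> gets, for every scale \<open>k \<le> log\<^sub>2 h\<close> and
  every nonempty prefix \<open>w\<close> of \<open>a\<close>, the coordinate \<open>min (depth of a below w + 1, 2\<^sup>k) / 2\<^bsup>k/p\<^esup>\<close>.
  Each scale moves by at most \<open>1\<close> in \<open>p\<close>-th power along an edge, so edges have length at most
  \<open>(log\<^sub>2 h + 1)\<^bsup>1/p\<^esup>\<close>; and the single scale \<open>k\<close> with \<open>2\<^sup>k\<close> comparable to
  \<open>d(a, b)\<close> already separates \<open>a\<close> and \<open>b\<close> by \<open>d(a, b) / 8\<close>.
\<close>

lemma convex_powr_nonneg:
  fixes p u v t :: real
  assumes "1 \<le> p" "0 \<le> u" "0 \<le> v" "0 \<le> t" "t \<le> 1"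
  shows "(t * u + (1 - t) * v) powr p \<le> t * u powr p + (1 - t) * v powr p"
proof -
  have powr_le_self: "s powr p \<le> s" if "0 \<le> s" "s \<le> 1" for s :: real
    using powr_le_one_le[of s p] that assms(1) by (cases "s = 0") auto
  consider "u = 0" | "v = 0" | "u > 0" "v > 0" using assms by linarith
  then show ?thesis
  proof cases
    case 1
    have "((1 - t) * v) powr p = (1 - t) powr p * v powr p"
      using assms by (simp add: powr_mult)
    also have "\<dots> \<le> (1 - t) * v powr p"
      using powr_le_self[of "1 - t"] assms by (intro mult_right_mono) auto
    finally show ?thesis using 1 assms by simp
  next
    case 2
    have "(t * u) powr p = t powr p * u powr p"
      using assms by (simp add: powr_mult)
    also have "\<dots> \<le> t * u powr p"
      using powr_le_self[of t] assms by (intro mult_right_mono) auto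
    finally show ?thesis using 2 assms by simp
  next
    case 3
    then show ?thesis
      using convex_onD[OF powr_convex[OF assms(1)], of t v u] assms by (auto simp: ac_simps)
  qed
qed

lemma abs_add_powr_le_weighted:
  fixes p l u w :: real
  assumes p: "1 \<le> p" and l: "0 < l" "l < 1"
  shows "\<bar>u + w\<bar> powr p \<le> l powr (1 - p) * \<bar>u\<bar> powr p + (1 - l) powr (1 - p) * \<bar>w\<bar> powr p"
proof -
  have split: "\<bar>u\<bar> + \<bar>w\<bar> = l * (\<bar>u\<bar> / l) + (1 - l) * (\<bar>w\<bar> / (1 - l))"
    using l by simp
  have "\<bar>u + w\<bar> powr p \<le> (\<bar>u\<bar> + \<bar>w\<bar>) powr p"
    using p by (intro powr_mono2) auto
  also have "\<dots> \<le> l * (\<bar>u\<bar> / l) powr p + (1 - l) * (\<bar>w\<bar> / (1 - l)) powr p"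
    unfolding split using assms by (intro convex_powr_nonneg) auto
  also have "\<dots> = l powr (1 - p) * \<bar>u\<bar> powr p + (1 - l) powr (1 - p) * \<bar>w\<bar> powr p"
    using l by (simp add: powr_divide powr_diff)
  finally show ?thesis .
qed

lemma add_powr_le_two_powr:
  fixes p a b :: real
  assumes "1 \<le> p" "0 \<le> a" "0 \<le> b"
  shows "(a + b) powr p \<le> 2 powr (p - 1) * (a powr p + b powr p)"
proof -
  have half: "(1/2 :: real) powr (1 - p) = 2 powr (p - 1)"
    by (simp add: powr_divide powr_minus_divide[symmetric] powr_minus[symmetric])
  have "(a + b) powr p \<le> (1/2) powr (1 - p) * \<bar>a\<bar> powr p + (1 - 1/2) powr (1 - p) * \<bar>b\<bar> powr p"
    using abs_add_powr_le_weighted[of p "1/2" a b] assms by simp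
  then show ?thesis
    using assms by (simp add: half algebra_simps)
qed

lemma abs_add_powr_diff_le:
  fixes p d :: real
  assumes p: "1 < p" and d: "0 < d"
  obtains C where "0 \<le> C"
    "\<And>u w. \<bar>\<bar>u + w\<bar> powr p - \<bar>w\<bar> powr p\<bar> \<le> d * \<bar>w\<bar> powr p + C * \<bar>u\<bar> powr p"
proof -
  define l where "l = (1 + d) powr (1 / (1 - p))"
  have l: "0 < l" "l < 1"
    unfolding l_def using d p by (auto intro: powr_less_one simp: divide_neg_pos)
  have ll: "l powr (1 - p) = 1 + d" unfolding l_def using d p by (simp add: powr_powr)
  define C where "C = (1 - l) powr (1 - p)"
  have C0: "0 \<le> C" unfolding C_def by simp
  have weighted: "\<bar>a + b\<bar> powr p \<le> (1 + d) * \<bar>a\<bar> powr p + C * \<bar>b\<bar> powr p" for a b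
    using abs_add_powr_le_weighted[of p l a b] p l ll by (simp add: C_def)
  have "\<bar>\<bar>u + w\<bar> powr p - \<bar>w\<bar> powr p\<bar> \<le> d * \<bar>w\<bar> powr p + C * \<bar>u\<bar> powr p" for u w
  proof -
    have up: "\<bar>u + w\<bar> powr p \<le> \<bar>w\<bar> powr p + d * \<bar>w\<bar> powr p + C * \<bar>u\<bar> powr p"
      using weighted[of w u] by (simp add: add.commute algebra_simps)
    have down: "\<bar>w\<bar> powr p \<le> (1 + d) * \<bar>u + w\<bar> powr p + C * \<bar>u\<bar> powr p"
      using weighted[of "u + w" "- u"] by simp
    have "(1 + d) * (\<bar>w\<bar> powr p - d * \<bar>w\<bar> powr p - C * \<bar>u\<bar> powr p)
        = \<bar>w\<bar> powr p - d * d * \<bar>w\<bar> powr p - (1 + d) * C * \<bar>u\<bar> powr p"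
      by (simp add: algebra_simps)
    also have "\<dots> \<le> \<bar>w\<bar> powr p - C * \<bar>u\<bar> powr p"
      using d C0 by (simp add: algebra_simps mult_nonneg_nonneg)
    also have "\<dots> \<le> (1 + d) * \<bar>u + w\<bar> powr p"
      using down by simp
    finally have "\<bar>w\<bar> powr p - d * \<bar>w\<bar> powr p - C * \<bar>u\<bar> powr p \<le> \<bar>u + w\<bar> powr p"
      using d by simp
    with up show ?thesis by linarith
  qed
  with C0 that show ?thesis by blast
qed

lemma powr_weighted_sum_eq:
  fixes p a b :: real
  assumes "0 < a" "0 < b"
  shows "(a / (a + b)) powr (1 - p) * a powr p + (b / (a + b)) powr (1 - p) * b powr p = (a + b) powr p"
proof -
  have weight: "(c / (a + b)) powr (1 - p) * c powr p = c * (a + b) powr (p - 1)" if "0 < c" for c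
  proof -
    have "(c / (a + b)) powr (1 - p) * c powr p = (c powr (1 - p) * c powr p) / (a + b) powr (1 - p)"
      using assms that by (simp add: powr_divide)
    also have "c powr (1 - p) * c powr p = c" using that by (simp add: powr_add[symmetric])
    finally show ?thesis
      using assms by (simp add: powr_minus_divide[symmetric] divide_inverse powr_minus[symmetric])
  qed
  have "(a + b) * (a + b) powr (p - 1) = (a + b) powr p"
    using assms by (simp add: powr_mult_base)
  then show ?thesis
    using assms by (simp add: weight distrib_right)
qed

lemma ln_floor_log_bounds:
  assumes h: "2 \<le> h"
  shows "ln (real h) \<le> 2 * ln 2 * real (floor_log h)"
    and "ln 2 * real (floor_log h + 1) \<le> 2 * ln (real h)"
proof -
  define k where "k = floor_log h"
  have "1 \<le> k" unfolding k_def using floor_log_le_iff[OF h] floor_log_power[of 1] by simp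
  then have "ln 2 * (real k + 1) \<le> ln 2 * (2 * real k)" by (intro mult_left_mono) auto
  then have k2: "ln 2 * real (k + 1) \<le> 2 * ln 2 * real k" by simp
  have "real (2 ^ k) \<le> real h" unfolding k_def using h floor_log_exp2_le[of h] by simp
  then have "ln (2 ^ k) \<le> ln (real h)" using h by (subst ln_le_cancel_iff) auto
  then have "2 * ln 2 * real k \<le> 2 * ln (real h)" by (simp add: ln_realpow mult.commute)
  from order_trans[OF k2 this, unfolded k_def]
  show "ln 2 * real (floor_log h + 1) \<le> 2 * ln (real h)" .
  have "real h < real (2 * 2 ^ k)" unfolding k_def using floor_log_exp2_gt[of h] by linarith
  then have "ln (real h) < ln (2 * 2 ^ k)" using h by (subst ln_less_cancel_iff) auto
  also have "\<dots> = ln 2 * real (k + 1)" by (simp add: ln_mult ln_realpow algebra_simps)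
  finally have "ln (real h) < 2 * ln 2 * real k" using k2 by (rule less_le_trans)
  then show "ln (real h) \<le> 2 * ln 2 * real (floor_log h)" unfolding k_def by simp
qed

lemma Lip_ge: "a \<in> A \<Longrightarrow> b \<in> A \<Longrightarrow> a \<noteq> b \<Longrightarrow> ereal (dB (f a) (f b) / dA a b) \<le> Lip A dA dB f"
  unfolding Lip_def by (rule SUP_upper2[of "(a, b)"]) auto

lemma Lip_inv_ge: "a \<in> A \<Longrightarrow> b \<in> A \<Longrightarrow> a \<noteq> b \<Longrightarrow> ereal (dA a b / dB (f a) (f b)) \<le> Lip_inv A dA dB f"
  unfolding Lip_inv_def by (rule SUP_upper2[of "(a, b)"]) auto

lemma Lip_le:
  assumes "\<And>a b. a \<in> A \<Longrightarrow> b \<in> A \<Longrightarrow> a \<noteq> b \<Longrightarrow> 0 < dA a b"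
    and "\<And>a b. a \<in> A \<Longrightarrow> b \<in> A \<Longrightarrow> a \<noteq> b \<Longrightarrow> dB (f a) (f b) \<le> L * dA a b"
  shows "Lip A dA dB f \<le> ereal L"
  unfolding Lip_def using assms by (intro SUP_least) (auto simp: pos_divide_le_eq mult.commute)

lemma Lip_inv_le:
  assumes "\<And>a b. a \<in> A \<Longrightarrow> b \<in> A \<Longrightarrow> a \<noteq> b \<Longrightarrow> 0 < dB (f a) (f b)"
    and "\<And>a b. a \<in> A \<Longrightarrow> b \<in> A \<Longrightarrow> a \<noteq> b \<Longrightarrow> dA a b \<le> D * dB (f a) (f b)"
  shows "Lip_inv A dA dB f \<le> ereal D"
  unfolding Lip_inv_def using assms by (intro SUP_least) (auto simp: pos_divide_le_eq mult.commute)

lemma distortion_le: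
  assumes f: "inj_on f M" "f ` M \<subseteq> Y" and ab: "a \<in> M" "b \<in> M" "a \<noteq> b" and "0 \<le> L"
    and dM: "\<And>a b. a \<in> M \<Longrightarrow> b \<in> M \<Longrightarrow> a \<noteq> b \<Longrightarrow> 0 < dM a b"
    and dY: "\<And>a b. a \<in> M \<Longrightarrow> b \<in> M \<Longrightarrow> a \<noteq> b \<Longrightarrow> 0 < dY (f a) (f b)"
    and upper: "\<And>a b. a \<in> M \<Longrightarrow> b \<in> M \<Longrightarrow> a \<noteq> b \<Longrightarrow> dY (f a) (f b) \<le> L * dM a b"
    and lower: "\<And>a b. a \<in> M \<Longrightarrow> b \<in> M \<Longrightarrow> a \<noteq> b \<Longrightarrow> dM a b \<le> D * dY (f a) (f b)"
  shows "distortion M dM Y dY \<le> ereal (L * D)"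
proof -
  \<comment> \<open>the pair \<open>a \<noteq> b\<close> excludes the empty supremum \<open>Lip_inv = -\<infinity>\<close>\<close>
  have "0 \<le> Lip_inv M dM dY f"
    using Lip_inv_ge[OF ab, of dM dY f] dM[OF ab] dY[OF ab] by (simp add: order_trans[rotated])
  moreover have "Lip M dM dY f \<le> ereal L" using dM upper by (rule Lip_le)
  moreover have "Lip_inv M dM dY f \<le> ereal D" using dY lower by (rule Lip_inv_le)
  ultimately have "Lip M dM dY f * Lip_inv M dM dY f \<le> ereal L * ereal D"
    using \<open>0 \<le> L\<close> by (intro ereal_mult_mono) auto
  moreover have "distortion M dM Y dY \<le> Lip M dM dY f * Lip_inv M dM dY f"
    unfolding distortion_def using f by (intro INF_lower) auto
  ultimately show ?thesis by simp
qed

lemma distortion_ge: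
  assumes ab: "a \<in> M" "b \<in> M" "a \<noteq> b"
    and dM: "\<And>a b. a \<in> M \<Longrightarrow> b \<in> M \<Longrightarrow> a \<noteq> b \<Longrightarrow> 0 < dM a b"
    and dY: "\<And>x y. x \<in> Y \<Longrightarrow> y \<in> Y \<Longrightarrow> x \<noteq> y \<Longrightarrow> 0 < dY x y"
    and bound: "\<And>f L D. inj_on f M \<Longrightarrow> f ` M \<subseteq> Y \<Longrightarrow> 0 < D
      \<Longrightarrow> (\<And>a b. a \<in> M \<Longrightarrow> b \<in> M \<Longrightarrow> a \<noteq> b \<Longrightarrow> dY (f a) (f b) \<le> L * dM a b)
      \<Longrightarrow> (\<And>a b. a \<in> M \<Longrightarrow> b \<in> M \<Longrightarrow> a \<noteq> b \<Longrightarrow> dM a b \<le> D * dY (f a) (f b))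
      \<Longrightarrow> c \<le> L * D"
  shows "ereal c \<le> distortion M dM Y dY"
  unfolding distortion_def
proof (rule INF_greatest)
  fix f assume "f \<in> {f. inj_on f M \<and> f ` M \<subseteq> Y}"
  then have f: "inj_on f M" "f ` M \<subseteq> Y" by auto
  have dYf: "0 < dY (f x) (f y)" if "x \<in> M" "y \<in> M" "x \<noteq> y" for x y
    using dY[of "f x" "f y"] f that by (auto simp: inj_on_eq_iff image_subset_iff)
  define Lp where "Lp = Lip M dM dY f"
  define Li where "Li = Lip_inv M dM dY f"
  have "0 < Lp" "0 < Li"
    using Lip_ge[OF ab, of dY f dM] Lip_inv_ge[OF ab, of dM dY f] dM[OF ab] dYf[OF ab]
    unfolding Lp_def Li_def by (auto intro: less_le_trans[rotated])
  have "ereal c \<le> Lp * Li"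
  proof (cases "Lp = \<infinity> \<or> Li = \<infinity>")
    case True
    with \<open>0 < Lp\<close> \<open>0 < Li\<close> show ?thesis by (auto simp: ereal_mult_infty ereal_infty_mult)
  next
    case False
    with \<open>0 < Lp\<close> \<open>0 < Li\<close> obtain L D where L: "Lp = ereal L" and D: "Li = ereal D"
      by (cases Lp; cases Li) auto
    have up: "dY (f x) (f y) \<le> L * dM x y" if "x \<in> M" "y \<in> M" "x \<noteq> y" for x y
      using Lip_ge[OF that, of dY f dM] dM[OF that] unfolding Lp_def[symmetric] L
      by (simp add: divide_le_eq mult.commute)
    have lo: "dM x y \<le> D * dY (f x) (f y)" if "x \<in> M" "y \<in> M" "x \<noteq> y" for x y
      using Lip_inv_ge[OF that, of dM dY f] dYf[OF that] unfolding Li_def[symmetric] D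
      by (simp add: divide_le_eq mult.commute)
    have "0 < D" using \<open>0 < Li\<close> D by simp
    from bound[OF f this up lo] have "c \<le> L * D" .
    then show ?thesis unfolding L D by simp
  qed
  then show "ereal c \<le> Lip M dM dY f * Lip_inv M dM dY f" unfolding Lp_def Li_def .
qed

section \<open>The sequence space \<open>\<ell>\<^sub>p\<close>\<close>

definition lp_norm_powr :: "real \<Rightarrow> (nat \<Rightarrow> real) \<Rightarrow> real" where
  "lp_norm_powr p x = (\<Sum>i. \<bar>x i\<bar> powr p)"

lemma lp_norm_powr_sums: "x \<in> lp_space p \<Longrightarrow> (\<lambda>i. \<bar>x i\<bar> powr p) sums lp_norm_powr p x"
  unfolding lp_space_def lp_norm_powr_def by (simp add: summable_sums)

lemma lp_norm_powr_nonneg: "x \<in> lp_space p \<Longrightarrow> 0 \<le> lp_norm_powr p x"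
  unfolding lp_norm_powr_def lp_space_def by (auto intro: suminf_nonneg)

lemma lp_norm_powr_eq_0_iff:
  assumes "x \<in> lp_space p"
  shows "lp_norm_powr p x = 0 \<longleftrightarrow> x = (\<lambda>i. 0)"
proof -
  have "lp_norm_powr p x = 0 \<longleftrightarrow> (\<forall>i. \<bar>x i\<bar> powr p = 0)"
    unfolding lp_norm_powr_def using assms unfolding lp_space_def
    by (subst suminf_eq_zero_iff) auto
  then show ?thesis by (auto simp: fun_eq_iff)
qed

lemma lp_space_uminus: "x \<in> lp_space p \<Longrightarrow> (\<lambda>i. - x i) \<in> lp_space p"
  unfolding lp_space_def by simp

lemma abs_le_lp_norm:
  assumes "0 < p" "x \<in> lp_space p"
  shows "\<bar>x i\<bar> \<le> lp_norm_powr p x powr (1/p)"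
proof -
  have "\<bar>x i\<bar> powr p \<le> lp_norm_powr p x"
    using sum_le_suminf[of "\<lambda>i. \<bar>x i\<bar> powr p" "{i}"] assms
    unfolding lp_space_def lp_norm_powr_def by auto
  then have "(\<bar>x i\<bar> powr p) powr (1/p) \<le> lp_norm_powr p x powr (1/p)"
    using assms by (intro powr_mono2) auto
  then show ?thesis using assms by (simp add: powr_powr)
qed

lemma lp_norm_powr_add_le_weighted:
  assumes p: "1 \<le> p" and l: "0 < l" "l < 1" and x: "x \<in> lp_space p" and y: "y \<in> lp_space p"
  shows "(\<lambda>i. x i + y i) \<in> lp_space p"
    and "lp_norm_powr p (\<lambda>i. x i + y i)
           \<le> l powr (1 - p) * lp_norm_powr p x + (1 - l) powr (1 - p) * lp_norm_powr p y"
proof -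
  define g where "g i = l powr (1 - p) * \<bar>x i\<bar> powr p + (1 - l) powr (1 - p) * \<bar>y i\<bar> powr p" for i
  have sums_g: "g sums (l powr (1 - p) * lp_norm_powr p x + (1 - l) powr (1 - p) * lp_norm_powr p y)"
    unfolding g_def by (intro sums_add sums_mult lp_norm_powr_sums x y)
  have le: "\<bar>x i + y i\<bar> powr p \<le> g i" for i
    unfolding g_def by (rule abs_add_powr_le_weighted[OF p l])
  have s: "summable (\<lambda>i. \<bar>x i + y i\<bar> powr p)"
    by (rule summable_comparison_test'[OF sums_summable[OF sums_g]]) (use le in auto)
  then show "(\<lambda>i. x i + y i) \<in> lp_space p"
    unfolding lp_space_def by simp
  show "lp_norm_powr p (\<lambda>i. x i + y i)
      \<le> l powr (1 - p) * lp_norm_powr p x + (1 - l) powr (1 - p) * lp_norm_powr p y"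
    using sums_le[OF le summable_sums[OF s] sums_g] by (simp only: lp_norm_powr_def)
qed

lemma lp_space_add: "1 \<le> p \<Longrightarrow> x \<in> lp_space p \<Longrightarrow> y \<in> lp_space p \<Longrightarrow> (\<lambda>i. x i + y i) \<in> lp_space p"
  using lp_norm_powr_add_le_weighted(1)[of p "1/2"] by simp

lemma lp_space_diff: "1 \<le> p \<Longrightarrow> x \<in> lp_space p \<Longrightarrow> y \<in> lp_space p \<Longrightarrow> (\<lambda>i. x i - y i) \<in> lp_space p"
  using lp_space_add[of p x "\<lambda>i. - y i"] lp_space_uminus[of y p] by simp

lemma lp_minkowski:
  assumes p: "1 \<le> p" and x: "x \<in> lp_space p" and y: "y \<in> lp_space p"
  shows "lp_norm_powr p (\<lambda>i. x i + y i) powr (1/p) \<le> lp_norm_powr p x powr (1/p) + lp_norm_powr p y powr (1/p)"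
proof -
  define a where "a = lp_norm_powr p x powr (1/p)"
  define b where "b = lp_norm_powr p y powr (1/p)"
  have pa: "lp_norm_powr p x = a powr p" and pb: "lp_norm_powr p y = b powr p"
    unfolding a_def b_def using p lp_norm_powr_nonneg[OF x] lp_norm_powr_nonneg[OF y]
    by (simp_all add: powr_powr)
  have "0 \<le> a" "0 \<le> b" unfolding a_def b_def by simp_all
  then consider "a = 0" | "b = 0" | "0 < a" "0 < b" by linarith
  then show ?thesis
  proof cases
    case 1
    then have "x = (\<lambda>i. 0)" using pa p lp_norm_powr_eq_0_iff[OF x] by simp
    then show ?thesis by (simp add: b_def)
  next
    case 2
    then have "y = (\<lambda>i. 0)" using pb p lp_norm_powr_eq_0_iff[OF y] by simp
    then show ?thesis by (simp add: a_def)
  next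
    case 3
    define l where "l = a / (a + b)"
    have l: "0 < l" "l < 1" "1 - l = b / (a + b)" using 3 by (auto simp: l_def field_simps)
    have "lp_norm_powr p (\<lambda>i. x i + y i) \<le> l powr (1 - p) * a powr p + (1 - l) powr (1 - p) * b powr p"
      using lp_norm_powr_add_le_weighted(2)[OF p l(1,2) x y] by (simp add: pa pb)
    also have "\<dots> = (a + b) powr p"
      unfolding l(3) unfolding l_def using 3 by (rule powr_weighted_sum_eq)
    finally have "lp_norm_powr p (\<lambda>i. x i + y i) powr (1/p) \<le> ((a + b) powr p) powr (1/p)"
      using p lp_norm_powr_nonneg[OF lp_space_add[OF p x y]] by (intro powr_mono2) auto
    also have "\<dots> = a + b" using p 3 by (simp add: powr_powr)
    finally show ?thesis by (simp add: a_def b_def)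
  qed
qed

lemma lp_dist_eq: "lp_dist p x y = lp_norm_powr p (\<lambda>i. x i - y i) powr (1/p)"
  unfolding lp_dist_def lp_norm_powr_def by simp

lemma lp_dist_nonneg: "0 \<le> lp_dist p x y"
  unfolding lp_dist_def by simp

lemma lp_dist_self [simp]: "lp_dist p x x = 0"
  unfolding lp_dist_def by simp

lemma lp_dist_commute: "lp_dist p x y = lp_dist p y x"
  unfolding lp_dist_def by (simp add: abs_minus_commute)

lemma lp_dist_powr:
  assumes "1 \<le> p" "x \<in> lp_space p" "y \<in> lp_space p"
  shows "lp_dist p x y powr p = lp_norm_powr p (\<lambda>i. x i - y i)"
  unfolding lp_dist_eq using assms lp_norm_powr_nonneg[OF lp_space_diff[OF assms]]
  by (simp add: powr_powr)

lemma lp_dist_triangle: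
  assumes p: "1 \<le> p" and "x \<in> lp_space p" "y \<in> lp_space p" "z \<in> lp_space p"
  shows "lp_dist p x z \<le> lp_dist p x y + lp_dist p y z"
  using lp_minkowski[OF p lp_space_diff[OF p, of x y] lp_space_diff[OF p, of y z]] assms
  unfolding lp_dist_eq by simp

lemma lp_dist_pos:
  assumes p: "1 \<le> p" and x: "x \<in> lp_space p" and y: "y \<in> lp_space p" and "x \<noteq> y"
  shows "0 < lp_dist p x y"
proof -
  have d: "(\<lambda>i. x i - y i) \<in> lp_space p" by (rule lp_space_diff[OF p x y])
  have "(\<lambda>i. x i - y i) \<noteq> (\<lambda>i. 0)" using \<open>x \<noteq> y\<close> by (auto simp: fun_eq_iff)
  then have "0 < lp_norm_powr p (\<lambda>i. x i - y i)"
    using lp_norm_powr_eq_0_iff[OF d] lp_norm_powr_nonneg[OF d] by linarith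
  then show ?thesis unfolding lp_dist_eq by simp
qed

lemma lp_space_zero [simp]: "(\<lambda>i. 0) \<in> lp_space p"
  unfolding lp_space_def by simp

lemma lp_norm_powr_eq_dist:
  assumes "0 < p" "x \<in> lp_space p"
  shows "lp_norm_powr p x = lp_dist p x (\<lambda>i. 0) powr p"
  using assms lp_norm_powr_nonneg[OF assms(2)] by (simp add: lp_dist_eq powr_powr)

section \<open>Coordinatewise limits and the Brezis--Lieb splitting\<close>

lemma real_bounded_imp_convergent_subseq:
  fixes X :: "nat \<Rightarrow> real"
  assumes "\<And>n. \<bar>X n\<bar> \<le> K"
  obtains r l where "strict_mono r" "(\<lambda>n. X (r n)) \<longlonglongrightarrow> l"
proof -
  have "bounded (range X)" using assms by (intro boundedI[of _ K]) auto
  then show ?thesis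
    using bounded_imp_convergent_subsequence[of X] that by (auto simp: o_def)
qed

lemma lp_space_coordinatewise_limit:
  fixes z :: "nat \<Rightarrow> nat \<Rightarrow> real"
  assumes p: "0 < p" and z: "\<And>n. z n \<in> lp_space p" and B: "\<And>n. lp_norm_powr p (z n) \<le> B"
    and lim: "\<And>i. (\<lambda>n. z n i) \<longlonglongrightarrow> w i"
  shows "w \<in> lp_space p"
proof -
  have "(\<Sum>i<m. \<bar>w i\<bar> powr p) \<le> B" for m
  proof (rule LIMSEQ_le_const2)
    show "(\<lambda>n. \<Sum>i<m. \<bar>z n i\<bar> powr p) \<longlonglongrightarrow> (\<Sum>i<m. \<bar>w i\<bar> powr p)"
      using p by (intro tendsto_sum tendsto_powr2 tendsto_rabs lim tendsto_const) auto
    have "(\<Sum>i<m. \<bar>z n i\<bar> powr p) \<le> B" for n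
    proof -
      have "(\<Sum>i<m. \<bar>z n i\<bar> powr p) \<le> lp_norm_powr p (z n)"
        using z[of n] unfolding lp_space_def lp_norm_powr_def by (intro sum_le_suminf) auto
      with B[of n] show ?thesis by linarith
    qed
    then show "\<exists>N. \<forall>n\<ge>N. (\<Sum>i<m. \<bar>z n i\<bar> powr p) \<le> B" by blast
  qed
  then show ?thesis
    unfolding lp_space_def using summableI_nonneg_bounded[of "\<lambda>i. \<bar>w i\<bar> powr p" B] by auto
qed

lemma lp_bounded_imp_coordinatewise_convergent_subseq:
  fixes z :: "nat \<Rightarrow> nat \<Rightarrow> real"
  assumes p: "0 < p" and z: "\<And>n. z n \<in> lp_space p" and B: "\<And>n. lp_norm_powr p (z n) \<le> B"
  obtains r w where "strict_mono r" "w \<in> lp_space p" "\<And>i. (\<lambda>n. z (r n) i) \<longlonglongrightarrow> w i"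
proof -
  have bd: "\<bar>z n i\<bar> \<le> B powr (1/p)" for n i
  proof -
    have "\<bar>z n i\<bar> \<le> lp_norm_powr p (z n) powr (1/p)"
      using p by (intro abs_le_lp_norm z)
    also have "\<dots> \<le> B powr (1/p)"
      using p B[of n] lp_norm_powr_nonneg[OF z[of n]] by (intro powr_mono2) auto
    finally show ?thesis .
  qed
  interpret S: subseqs "\<lambda>i s. convergent (\<lambda>k. z (s k) i)"
  proof
    fix i and s :: "nat \<Rightarrow> nat"
    obtain r l where "strict_mono r" "(\<lambda>k. z (s (r k)) i) \<longlonglongrightarrow> l"
      using real_bounded_imp_convergent_subseq[of "\<lambda>k. z (s k) i"] bd by blast
    then show "\<exists>r'. strict_mono r' \<and> convergent (\<lambda>k. z ((s \<circ> r') k) i)"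
      by (auto simp: convergent_def)
  qed
  define w where "w i = lim (\<lambda>k. z (S.diagseq k) i)" for i
  have "convergent (\<lambda>k. z (S.diagseq k) i)" for i
  proof -
    have "convergent (\<lambda>k. z ((S.diagseq \<circ> (+) (Suc i)) k) i)"
      by (rule S.diagseq_holds) (auto simp: o_def dest: convergent_subseq_convergent[unfolded o_def])
    then obtain L where "(\<lambda>k. z (S.diagseq (k + Suc i)) i) \<longlonglongrightarrow> L"
      by (auto simp: convergent_def o_def add.commute)
    then show ?thesis
      using LIMSEQ_offset[of "\<lambda>k. z (S.diagseq k) i" "Suc i"] by (auto simp: convergent_def)
  qed
  then have lim: "(\<lambda>k. z (S.diagseq k) i) \<longlonglongrightarrow> w i" for i
    unfolding w_def by (simp add: convergent_LIMSEQ_iff)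
  have "w \<in> lp_space p"
    using p z B lim by (rule lp_space_coordinatewise_limit)
  with lim S.subseq_diagseq that show ?thesis by blast
qed

lemma lp_norm_powr_add_defect_le:
  assumes p: "1 \<le> p" and v: "v \<in> lp_space p" and e: "e \<in> lp_space p" and "0 \<le> d" "0 \<le> C"
    and C: "\<And>u w. \<bar>\<bar>u + w\<bar> powr p - \<bar>w\<bar> powr p\<bar> \<le> d * \<bar>w\<bar> powr p + C * \<bar>u\<bar> powr p"
  shows "\<bar>lp_norm_powr p (\<lambda>i. v i + e i) - lp_norm_powr p v - lp_norm_powr p e\<bar>
    \<le> (\<Sum>i<N. \<bar>\<bar>v i + e i\<bar> powr p - \<bar>v i\<bar> powr p - \<bar>e i\<bar> powr p\<bar>)
       + d * lp_norm_powr p e + (C + 1) * (lp_norm_powr p v - (\<Sum>i<N. \<bar>v i\<bar> powr p))"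
proof -
  define \<phi> where "\<phi> i = \<bar>v i + e i\<bar> powr p - \<bar>v i\<bar> powr p - \<bar>e i\<bar> powr p" for i
  define \<psi> where "\<psi> i = (if i \<in> {..<N} then \<bar>\<phi> i\<bar> else 0) + d * \<bar>e i\<bar> powr p
      + (C + 1) * (\<bar>v i\<bar> powr p - (if i \<in> {..<N} then \<bar>v i\<bar> powr p else 0))" for i
  have sums_\<phi>: "\<phi> sums (lp_norm_powr p (\<lambda>i. v i + e i) - lp_norm_powr p v - lp_norm_powr p e)"
    unfolding \<phi>_def by (intro sums_diff lp_norm_powr_sums lp_space_add[OF p] v e)
  have sums_\<psi>: "\<psi> sums ((\<Sum>i<N. \<bar>\<phi> i\<bar>) + d * lp_norm_powr p e
      + (C + 1) * (lp_norm_powr p v - (\<Sum>i<N. \<bar>v i\<bar> powr p)))"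
    unfolding \<psi>_def by (intro sums_add sums_mult sums_diff sums_If_finite_set lp_norm_powr_sums v e) auto
  have "\<bar>\<phi> i\<bar> \<le> \<psi> i" for i
  proof (cases "i < N")
    case False
    have "\<bar>\<phi> i\<bar> \<le> \<bar>\<bar>v i + e i\<bar> powr p - \<bar>e i\<bar> powr p\<bar> + \<bar>v i\<bar> powr p"
      unfolding \<phi>_def using powr_ge_zero[of "\<bar>v i\<bar>" p] by arith
    also have "\<dots> \<le> \<psi> i"
      using C[of "v i" "e i"] False unfolding \<psi>_def by (simp add: algebra_simps)
    finally show ?thesis .
  qed (use assms in \<open>simp add: \<psi>_def\<close>)
  then have "\<phi> i \<le> \<psi> i" "- \<phi> i \<le> \<psi> i" for i
    using abs_le_iff by blast+
  from sums_le[OF this(1) sums_\<phi> sums_\<psi>] sums_le[OF this(2) sums_minus[OF sums_\<phi>] sums_\<psi>]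
  show ?thesis unfolding \<phi>_def by linarith
qed

lemma lp_brezis_lieb:
  assumes p: "1 < p" and v: "v \<in> lp_space p" and e: "\<And>n. e n \<in> lp_space p"
    and B: "\<And>n. lp_norm_powr p (e n) \<le> B" and e0: "\<And>i. (\<lambda>n. e n i) \<longlonglongrightarrow> 0"
  shows "(\<lambda>n. lp_norm_powr p (\<lambda>i. v i + e n i) - lp_norm_powr p v - lp_norm_powr p (e n)) \<longlonglongrightarrow> 0"
proof (rule LIMSEQ_I)
  fix r :: real assume r: "0 < r"
  have B0: "0 \<le> B" using B[of 0] lp_norm_powr_nonneg[OF e[of 0]] by linarith
  define d where "d = r / (4 * (B + 1))"
  have d: "0 < d" "d * B < r / 4" unfolding d_def using r B0 by (auto simp: field_simps)
  obtain C where C0: "0 \<le> C"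
    and C: "\<And>u w. \<bar>\<bar>u + w\<bar> powr p - \<bar>w\<bar> powr p\<bar> \<le> d * \<bar>w\<bar> powr p + C * \<bar>u\<bar> powr p"
    using abs_add_powr_diff_le[OF p d(1)] by blast
  have "(\<lambda>N. \<Sum>i<N. \<bar>v i\<bar> powr p) \<longlonglongrightarrow> lp_norm_powr p v"
    using lp_norm_powr_sums[OF v] by (simp add: sums_def)
  moreover have "0 < r / (4 * (C + 1))" using r C0 by simp
  ultimately obtain N where "norm ((\<Sum>i<N. \<bar>v i\<bar> powr p) - lp_norm_powr p v) < r / (4 * (C + 1))"
    using LIMSEQ_D by blast
  then have tail: "(C + 1) * (lp_norm_powr p v - (\<Sum>i<N. \<bar>v i\<bar> powr p)) < r / 4"
    using C0 by (simp add: field_simps abs_less_iff)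
  have "(\<lambda>n. \<Sum>i<N. \<bar>\<bar>v i + e n i\<bar> powr p - \<bar>v i\<bar> powr p - \<bar>e n i\<bar> powr p\<bar>)
      \<longlonglongrightarrow> (\<Sum>i<N. \<bar>\<bar>v i + 0\<bar> powr p - \<bar>v i\<bar> powr p - \<bar>0::real\<bar> powr p\<bar>)"
    using p by (intro tendsto_sum tendsto_rabs tendsto_diff tendsto_powr2 tendsto_add e0 tendsto_const) auto
  then have "(\<lambda>n. \<Sum>i<N. \<bar>\<bar>v i + e n i\<bar> powr p - \<bar>v i\<bar> powr p - \<bar>e n i\<bar> powr p\<bar>) \<longlonglongrightarrow> 0"
    using p by simp
  moreover have "0 < r / 4" using r by simp
  ultimately obtain M where head: "\<forall>n\<ge>M.
      norm ((\<Sum>i<N. \<bar>\<bar>v i + e n i\<bar> powr p - \<bar>v i\<bar> powr p - \<bar>e n i\<bar> powr p\<bar>) - 0) < r / 4"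
    using LIMSEQ_D by blast
  show "\<exists>M. \<forall>n\<ge>M. norm (lp_norm_powr p (\<lambda>i. v i + e n i) - lp_norm_powr p v - lp_norm_powr p (e n) - 0) < r"
  proof (intro exI allI impI)
    fix n assume "M \<le> n"
    have "d * lp_norm_powr p (e n) \<le> d * B" using B[of n] d by simp
    moreover have "\<bar>lp_norm_powr p (\<lambda>i. v i + e n i) - lp_norm_powr p v - lp_norm_powr p (e n)\<bar>
      \<le> (\<Sum>i<N. \<bar>\<bar>v i + e n i\<bar> powr p - \<bar>v i\<bar> powr p - \<bar>e n i\<bar> powr p\<bar>)
         + d * lp_norm_powr p (e n) + (C + 1) * (lp_norm_powr p v - (\<Sum>i<N. \<bar>v i\<bar> powr p))"
      using p d(1) by (intro lp_norm_powr_add_defect_le v e C0 C) auto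
    ultimately show "norm (lp_norm_powr p (\<lambda>i. v i + e n i) - lp_norm_powr p v - lp_norm_powr p (e n) - 0) < r"
      using head \<open>M \<le> n\<close> tail d(2) by (simp only: real_norm_def diff_zero) fastforce
  qed
qed

lemma lp_dist_powr_brezis_lieb:
  fixes z :: "nat \<Rightarrow> nat \<Rightarrow> real"
  assumes p: "1 < p" and w: "w \<in> lp_space p" and z: "\<And>n. z n \<in> lp_space p"
    and R: "\<And>n. lp_dist p w (z n) \<le> R" and lim: "\<And>i. (\<lambda>n. z n i) \<longlonglongrightarrow> w i"
    and \<mu>: "(\<lambda>n. lp_dist p w (z n) powr p) \<longlonglongrightarrow> \<mu>" and v: "v \<in> lp_space p"
  shows "(\<lambda>n. lp_dist p v (z n) powr p) \<longlonglongrightarrow> lp_dist p v w powr p + \<mu>"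
proof -
  have p1: "1 \<le> p" using p by simp
  define e where "e n i = w i - z n i" for n i
  have e: "e n \<in> lp_space p" for n unfolding e_def by (rule lp_space_diff[OF p1 w z])
  have e_norm: "lp_norm_powr p (e n) = lp_dist p w (z n) powr p" for n
    unfolding e_def by (rule lp_dist_powr[OF p1 w z, symmetric])
  have e_bound: "lp_norm_powr p (e n) \<le> R powr p" for n
    unfolding e_norm using R[of n] p by (intro powr_mono2) (auto simp: lp_dist_nonneg)
  have e0: "(\<lambda>n. e n i) \<longlonglongrightarrow> 0" for i
    using tendsto_diff[OF tendsto_const[of "w i"] lim[of i]] unfolding e_def by simp
  have vw: "(\<lambda>i. v i - w i) \<in> lp_space p" by (rule lp_space_diff[OF p1 v w])
  have "(\<lambda>n. lp_norm_powr p (\<lambda>i. (v i - w i) + e n i) - lp_norm_powr p (\<lambda>i. v i - w i)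
      - lp_norm_powr p (e n)) \<longlonglongrightarrow> 0"
    by (rule lp_brezis_lieb[OF p vw e e_bound e0])
  then have "(\<lambda>n. (lp_norm_powr p (\<lambda>i. (v i - w i) + e n i) - lp_norm_powr p (\<lambda>i. v i - w i)
      - lp_norm_powr p (e n)) + lp_norm_powr p (\<lambda>i. v i - w i) + lp_norm_powr p (e n))
      \<longlonglongrightarrow> 0 + lp_norm_powr p (\<lambda>i. v i - w i) + \<mu>"
    using \<mu> unfolding e_norm[symmetric] by (intro tendsto_add tendsto_const)
  moreover have "lp_norm_powr p (\<lambda>i. (v i - w i) + e n i) = lp_dist p v (z n) powr p" for n
    unfolding lp_dist_powr[OF p1 v z] by (simp add: e_def)
  ultimately show ?thesis
    unfolding lp_dist_powr[OF p1 v w] by simp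
qed

lemma lp_dist_powr_subseq_split:
  fixes z :: "nat \<Rightarrow> nat \<Rightarrow> real"
  assumes p: "1 < p" and y: "y \<in> lp_space p" and z: "\<And>n. z n \<in> lp_space p"
    and A: "\<And>n. lp_dist p y (z n) \<le> A"
  obtains r w \<mu> where "strict_mono r" "w \<in> lp_space p"
    "\<And>v. v \<in> lp_space p \<Longrightarrow> (\<lambda>n. lp_dist p v (z (r n)) powr p) \<longlonglongrightarrow> lp_dist p v w powr p + \<mu>"
proof -
  have p1: "1 \<le> p" and p0: "0 < p" using p by auto
  have dist_le: "lp_dist p x (z n) \<le> lp_dist p x y + A" if "x \<in> lp_space p" for x n
    using lp_dist_triangle[OF p1 that y z[of n]] A[of n] by linarith
  have "lp_norm_powr p (z n) \<le> (lp_dist p (\<lambda>i. 0) y + A) powr p" for n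
    using dist_le[of "\<lambda>i. 0" n] p lp_dist_nonneg[of p "\<lambda>i. 0" "z n"]
    unfolding lp_norm_powr_eq_dist[OF p0 z[of n]] lp_dist_commute[of p "z n"]
    by (intro powr_mono2) auto
  then obtain r0 w where r0: "strict_mono r0" and w: "w \<in> lp_space p"
    and lim: "\<And>i. (\<lambda>n. z (r0 n) i) \<longlonglongrightarrow> w i"
    using lp_bounded_imp_coordinatewise_convergent_subseq[of p z, OF p0 z] by blast
  have "\<bar>lp_dist p w (z (r0 n)) powr p\<bar> \<le> (lp_dist p w y + A) powr p" for n
    using dist_le[OF w, of "r0 n"] p by (auto intro: powr_mono2 simp: lp_dist_nonneg)
  then obtain q \<mu> where q: "strict_mono q" and \<mu>: "(\<lambda>n. lp_dist p w (z (r0 (q n))) powr p) \<longlonglongrightarrow> \<mu>"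
    using real_bounded_imp_convergent_subseq[of "\<lambda>n. lp_dist p w (z (r0 n)) powr p"] by blast
  have "(\<lambda>n. z (r0 (q n)) i) \<longlonglongrightarrow> w i" for i
    using LIMSEQ_subseq_LIMSEQ[OF lim q] by (simp add: o_def)
  then have "(\<lambda>n. lp_dist p v (z (r0 (q n))) powr p) \<longlonglongrightarrow> lp_dist p v w powr p + \<mu>"
    if "v \<in> lp_space p" for v
    using dist_le[OF w] by (intro lp_dist_powr_brezis_lieb[OF p w z _ _ \<mu> that]) auto
  then show ?thesis by (intro that[OF strict_mono_o[OF r0 q] w, of \<mu>]) simp
qed

section \<open>The fork lemma\<close>

definition fork_const :: "real \<Rightarrow> real" where
  "fork_const p = (2 powr (p - 1) - 1) / 4"

lemma fork_const_pos: "1 < p \<Longrightarrow> 0 < fork_const p"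
  unfolding fork_const_def by simp

lemma lp_split_const_ge_separation:
  fixes z :: "nat \<Rightarrow> nat \<Rightarrow> real"
  assumes p: "1 < p" and w: "w \<in> lp_space p" and z: "\<And>n. z n \<in> lp_space p" and r: "strict_mono r"
    and lim: "\<And>v. v \<in> lp_space p \<Longrightarrow> (\<lambda>n. lp_dist p v (z (r n)) powr p) \<longlonglongrightarrow> lp_dist p v w powr p + \<mu>"
    and sep: "\<And>n m. n \<noteq> m \<Longrightarrow> \<sigma> \<le> lp_dist p (z n) (z m)" and \<sigma>: "0 < \<sigma>"
  shows "\<sigma> powr p \<le> \<mu> + \<mu>"
proof (rule LIMSEQ_le_const)
  have "(\<lambda>n. lp_dist p w (z (r n)) powr p) \<longlonglongrightarrow> 0 + \<mu>"
    using lim[OF w] p by simp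
  then have "(\<lambda>n. lp_dist p w (z (r n)) powr p + \<mu>) \<longlonglongrightarrow> (0 + \<mu>) + \<mu>"
    by (intro tendsto_add tendsto_const)
  then show "(\<lambda>n. lp_dist p (z (r n)) w powr p + \<mu>) \<longlonglongrightarrow> \<mu> + \<mu>"
    by (simp add: lp_dist_commute[of p _ w])
  show "\<exists>N. \<forall>n\<ge>N. \<sigma> powr p \<le> lp_dist p (z (r n)) w powr p + \<mu>"
  proof (intro exI allI impI)
    fix n
    have "\<forall>\<^sub>F m in sequentially. \<sigma> powr p \<le> lp_dist p (z (r n)) (z (r m)) powr p"
    proof (rule eventually_sequentiallyI[of "Suc n"])
      fix m assume "Suc n \<le> m"
      then have "r n \<noteq> r m" using strict_mono_less[OF r, of n m] by simp
      then show "\<sigma> powr p \<le> lp_dist p (z (r n)) (z (r m)) powr p"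
        using sep \<sigma> p by (intro powr_mono2) auto
    qed
    then show "\<sigma> powr p \<le> lp_dist p (z (r n)) w powr p + \<mu>"
      by (rule tendsto_lowerbound[OF lim[OF z]]) simp
  qed
qed

text \<open>Matousek's fork lemma: \<open>\<ell>\<^sub>p\<close> contains no almost isometric infinite fork
  \<open>x - y - z n\<close> with separated tines.\<close>
lemma lp_fork:
  fixes z :: "nat \<Rightarrow> nat \<Rightarrow> real"
  assumes p: "1 < p" and x: "x \<in> lp_space p" and y: "y \<in> lp_space p" and z: "\<And>n. z n \<in> lp_space p"
    and xy: "lp_dist p x y \<le> A" and yz: "\<And>n. lp_dist p y (z n) \<le> A"
    and sep: "\<And>n m. n \<noteq> m \<Longrightarrow> \<sigma> \<le> lp_dist p (z n) (z m)" and \<sigma>: "0 < \<sigma>"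
  obtains n where "lp_dist p x (z n) powr p \<le> (2 * A) powr p - fork_const p * \<sigma> powr p"
proof -
  have p1: "1 \<le> p" using p by simp
  have A0: "0 \<le> A" using yz[of 0] lp_dist_nonneg[of p y "z 0"] by linarith
  obtain r w \<mu> where r: "strict_mono r" and w: "w \<in> lp_space p" and lim:
    "\<And>v. v \<in> lp_space p \<Longrightarrow> (\<lambda>n. lp_dist p v (z (r n)) powr p) \<longlonglongrightarrow> lp_dist p v w powr p + \<mu>"
    using lp_dist_powr_subseq_split[of p y z A, OF p y z yz] by blast
  have yw: "lp_dist p y w powr p + \<mu> \<le> A powr p"
  proof (rule LIMSEQ_le_const2[OF lim[OF y]])
    show "\<exists>N. \<forall>n\<ge>N. lp_dist p y (z (r n)) powr p \<le> A powr p"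
      using yz p by (intro exI allI impI powr_mono2) (auto simp: lp_dist_nonneg)
  qed
  have \<sigma>_le: "\<sigma> powr p \<le> \<mu> + \<mu>"
    by (rule lp_split_const_ge_separation[OF p w z r lim sep \<sigma>])
  have "lp_dist p x w \<le> A + lp_dist p y w"
    using lp_dist_triangle[OF p1 x y w] xy by linarith
  then have "lp_dist p x w powr p \<le> (A + lp_dist p y w) powr p"
    using p by (intro powr_mono2) (auto simp: lp_dist_nonneg)
  also have "\<dots> \<le> 2 powr (p - 1) * (A powr p + lp_dist p y w powr p)"
    using p A0 by (intro add_powr_le_two_powr) (auto simp: lp_dist_nonneg)
  finally have xw: "lp_dist p x w powr p \<le> 2 powr (p - 1) * (A powr p + lp_dist p y w powr p)" .
  define c where "c = 2 powr (p - 1)"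
  have c1: "1 < c" unfolding c_def using p by simp
  have twoA: "(2 * A) powr p = 2 * c * A powr p"
    using A0 unfolding c_def by (simp add: powr_mult powr_diff)
  have "c * (A powr p + lp_dist p y w powr p) \<le> c * (A powr p + (A powr p - \<mu>))"
    using yw c1 by (intro mult_left_mono) auto
  then have "lp_dist p x w powr p + \<mu> \<le> c * (A powr p + (A powr p - \<mu>)) + \<mu>"
    using xw unfolding c_def[symmetric] by linarith
  also have "\<dots> = (2 * A) powr p - (c - 1) * \<mu>" unfolding twoA by (simp add: algebra_simps)
  also have "\<dots> \<le> (2 * A) powr p - (c - 1) / 2 * \<sigma> powr p"
    using \<sigma>_le c1 by (simp add: mult_left_mono)
  also have "\<dots> < (2 * A) powr p - fork_const p * \<sigma> powr p"
    using c1 \<sigma> unfolding fork_const_def c_def[symmetric] by simp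
  finally have "\<forall>\<^sub>F n in sequentially. lp_dist p x (z (r n)) powr p < (2 * A) powr p - fork_const p * \<sigma> powr p"
    using order_tendstoD(2)[OF lim[OF x]] by blast
  then obtain n where "lp_dist p x (z (r n)) powr p < (2 * A) powr p - fork_const p * \<sigma> powr p"
    using eventually_sequentially by auto
  then show ?thesis using that[of "r n"] by simp
qed

section \<open>The tree metric\<close>

lemma lcp_append_same: "lcp (u @ xs) (u @ ys) = length u + lcp xs ys"
  by (induction u) auto

lemma lcp_le_length: "lcp xs ys \<le> length xs" "lcp xs ys \<le> length ys"
  by (induction xs ys rule: lcp.induct) auto

lemma lcp_append_right: "lcp u (u @ r) = length u"
  using lcp_append_same[of u "[]" r] by simp

lemma lcp_self: "lcp u u = length u"
  using lcp_append_right[of u "[]"] by simp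

lemma lcp_commute: "lcp xs ys = lcp ys xs"
  by (induction xs ys rule: lcp.induct) auto

lemma take_lcp: "take (lcp xs ys) xs = take (lcp xs ys) ys"
  by (induction xs ys rule: lcp.induct) auto

lemma le_lcp_if_take_eq:
  "j \<le> length xs \<Longrightarrow> j \<le> length ys \<Longrightarrow> take j xs = take j ys \<Longrightarrow> j \<le> lcp xs ys"
proof (induction xs ys arbitrary: j rule: lcp.induct)
  case (1 x xs y ys)
  then show ?case by (cases j) auto
qed auto

lemma tree_dist_self [simp]: "tree_dist a a = 0"
  unfolding tree_dist_def by (simp add: lcp_self)

lemma tree_dist_commute: "tree_dist a b = tree_dist b a"
  unfolding tree_dist_def by (simp add: lcp_commute add.commute)

lemma tree_dist_snoc: "tree_dist a (a @ [i]) = 1"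
  unfolding tree_dist_def using lcp_append_right[of a "[i]"] by simp

lemma tree_dist_siblings: "j \<noteq> k \<Longrightarrow> tree_dist (u @ [i, j]) (u @ [i, k]) = 2"
  unfolding tree_dist_def using lcp_append_same[of "u @ [i]" "[j]" "[k]"] by simp

lemma tree_dist_ge_1: "a \<noteq> b \<Longrightarrow> 1 \<le> tree_dist a b"
proof (induction a b rule: lcp.induct)
  case (1 x xs y ys)
  show ?case
  proof (cases "x = y")
    case True
    then have "1 \<le> tree_dist xs ys" using 1 by simp
    with True show ?thesis unfolding tree_dist_def by simp
  qed (simp add: tree_dist_def)
next
  case ("2_1" ys)
  then show ?case unfolding tree_dist_def by (cases ys) auto
next
  case ("2_2" xs)
  then show ?case unfolding tree_dist_def by (cases xs) auto
qed

text \<open>A copy of the tree of height \<open>m\<close> in the tree of height \<open>2 m\<close> in which every edge becomes a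
  path of length 2; \<open>sel\<close> chooses the intermediate vertices.\<close>
fun tree_dilate :: "(nat list \<Rightarrow> nat \<Rightarrow> nat) \<Rightarrow> nat list \<Rightarrow> nat list \<Rightarrow> nat list" where
  "tree_dilate sel u [] = u"
| "tree_dilate sel u (i # a) = tree_dilate sel (u @ [i, sel u i]) a"

lemma length_tree_dilate: "length (tree_dilate sel u a) = length u + 2 * length a"
  by (induction a arbitrary: u) auto

lemma tree_dilate_prefix: "\<exists>r. tree_dilate sel u a = u @ r"
proof (induction a arbitrary: u)
  case (Cons i a)
  then obtain r where "tree_dilate sel (u @ [i, sel u i]) a = (u @ [i, sel u i]) @ r" by blast
  then show ?case by auto
qed auto

lemma tree_dilate_snoc:
  "tree_dilate sel u (a @ [i]) = tree_dilate sel u a @ [i, sel (tree_dilate sel u a) i]"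
  by (induction a arbitrary: u) auto

lemma lcp_tree_dilate: "lcp (tree_dilate sel u a) (tree_dilate sel u b) = length u + 2 * lcp a b"
proof (induction a arbitrary: u b)
  case Nil
  obtain r where "tree_dilate sel u b = u @ r" using tree_dilate_prefix by blast
  then show ?case by (simp add: lcp_append_right)
next
  case (Cons i a)
  show ?case
  proof (cases b)
    case Nil
    obtain r where "tree_dilate sel u (i # a) = u @ r" using tree_dilate_prefix by blast
    then show ?thesis using Nil by (simp add: lcp_append_right lcp_commute[of "u @ r"])
  next
    case (Cons j b')
    show ?thesis
    proof (cases "i = j")
      case True
      then show ?thesis using Cons.IH[of "u @ [i, sel u i]" b'] Cons by simp
    next
      case False
      obtain r1 where "tree_dilate sel (u @ [i, sel u i]) a = (u @ [i, sel u i]) @ r1"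
        using tree_dilate_prefix by blast
      moreover obtain r2 where "tree_dilate sel (u @ [j, sel u j]) b' = (u @ [j, sel u j]) @ r2"
        using tree_dilate_prefix by blast
      ultimately show ?thesis
        using Cons False lcp_append_same[of u "i # sel u i # r1" "j # sel u j # r2"] by simp
    qed
  qed
qed

lemma tree_dist_tree_dilate: "tree_dist (tree_dilate sel [] a) (tree_dilate sel [] b) = 2 * tree_dist a b"
  using lcp_le_length[of a b] unfolding tree_dist_def lcp_tree_dilate length_tree_dilate by simp

section \<open>The lower bound\<close>

definition tree_lp_bounds :: "real \<Rightarrow> nat \<Rightarrow> real \<Rightarrow> real \<Rightarrow> (nat list \<Rightarrow> nat \<Rightarrow> real) \<Rightarrow> bool" where
  "tree_lp_bounds p m s L g \<longleftrightarrow>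
     (\<forall>a\<in>tree_vertices m. g a \<in> lp_space p)
     \<and> (\<forall>a\<in>tree_vertices m. \<forall>b\<in>tree_vertices m. s * tree_dist a b \<le> lp_dist p (g a) (g b))
     \<and> (\<forall>a i. length a < m \<longrightarrow> lp_dist p (g a) (g (a @ [i])) \<le> L)"

lemma tree_lp_bounds_mono: "tree_lp_bounds p m s L g \<Longrightarrow> m' \<le> m \<Longrightarrow> tree_lp_bounds p m' s L g"
  unfolding tree_lp_bounds_def tree_vertices_def by auto

lemma tree_lp_bounds_le:
  assumes "tree_lp_bounds p m s L g" "1 \<le> m"
  shows "s \<le> L"
proof -
  have "s * tree_dist [] [0] \<le> lp_dist p (g []) (g [0])"
    using assms unfolding tree_lp_bounds_def tree_vertices_def by auto
  moreover have "lp_dist p (g []) (g ([] @ [0])) \<le> L"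
    using assms unfolding tree_lp_bounds_def by (metis list.size(3) less_le_trans zero_less_one)
  ultimately show ?thesis using tree_dist_snoc[of "[]" 0] by simp
qed

lemma tree_lp_bounds_fork:
  assumes p: "1 < p" and s: "0 < s" and g: "tree_lp_bounds p m s L g" and u: "length u + 2 \<le> m"
  shows "\<exists>j. lp_dist p (g u) (g (u @ [i, j])) powr p \<le> (2 * L) powr p - fork_const p * (2 * s) powr p"
proof -
  have lp: "\<And>a. length a \<le> m \<Longrightarrow> g a \<in> lp_space p"
    and expand: "\<And>a b. length a \<le> m \<Longrightarrow> length b \<le> m \<Longrightarrow> s * tree_dist a b \<le> lp_dist p (g a) (g b)"
    and edge: "\<And>a i. length a < m \<Longrightarrow> lp_dist p (g a) (g (a @ [i])) \<le> L"
    using g unfolding tree_lp_bounds_def tree_vertices_def by auto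
  obtain j where "lp_dist p (g u) (g (u @ [i, j])) powr p \<le> (2 * L) powr p - fork_const p * (2 * s) powr p"
  proof (rule lp_fork[OF p, of "g u" "g (u @ [i])" "\<lambda>j. g (u @ [i, j])" L "2 * s"])
    show "g u \<in> lp_space p" "g (u @ [i]) \<in> lp_space p" "g (u @ [i, j]) \<in> lp_space p" for j
      using u by (auto intro: lp)
    show "lp_dist p (g u) (g (u @ [i])) \<le> L" using u by (intro edge) auto
    show "lp_dist p (g (u @ [i])) (g (u @ [i, j])) \<le> L" for j
      using edge[of "u @ [i]" j] u by simp
    show "2 * s \<le> lp_dist p (g (u @ [i, j])) (g (u @ [i, k]))" if "j \<noteq> k" for j k
      using expand[of "u @ [i, j]" "u @ [i, k]"] u tree_dist_siblings[OF that, of u i] by simp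
  qed (use s in auto)
  then show ?thesis by blast
qed

text \<open>Choosing the intermediate vertices of the dilated copy by the fork lemma shortens its edges.\<close>
lemma tree_lp_bounds_halve:
  assumes p: "1 < p" and s: "0 < s" and m: "1 \<le> m" and g: "tree_lp_bounds p (2 * m) s L g"
  defines "Q \<equiv> (2 * L) powr p - fork_const p * (2 * s) powr p"
  shows "0 \<le> Q" and "\<exists>g'. tree_lp_bounds p m (2 * s) (Q powr (1/p)) g'"
proof -
  define sel where "sel u i = (SOME j. lp_dist p (g u) (g (u @ [i, j])) powr p \<le> Q)" for u i
  have sel: "lp_dist p (g u) (g (u @ [i, sel u i])) powr p \<le> Q" if "length u + 2 \<le> 2 * m" for u i
    unfolding sel_def Q_def by (rule someI_ex[OF tree_lp_bounds_fork[OF p s g that]])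
  have "lp_dist p (g []) (g ([] @ [0, sel [] 0])) powr p \<le> Q" using m by (intro sel) simp
  then show "0 \<le> Q" using powr_ge_zero order_trans by blast
  have lp: "\<And>a. length a \<le> 2 * m \<Longrightarrow> g a \<in> lp_space p"
    and expand: "\<And>a b. length a \<le> 2 * m \<Longrightarrow> length b \<le> 2 * m \<Longrightarrow> s * tree_dist a b \<le> lp_dist p (g a) (g b)"
    using g unfolding tree_lp_bounds_def tree_vertices_def by auto
  have "tree_lp_bounds p m (2 * s) (Q powr (1/p)) (\<lambda>a. g (tree_dilate sel [] a))"
    unfolding tree_lp_bounds_def tree_vertices_def
  proof (intro conjI ballI allI impI)
    fix a :: "nat list" assume "a \<in> {a. length a \<le> m}"
    then show "g (tree_dilate sel [] a) \<in> lp_space p" by (intro lp) (simp add: length_tree_dilate)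
  next
    fix a b :: "nat list" assume "a \<in> {a. length a \<le> m}" "b \<in> {a. length a \<le> m}"
    then show "2 * s * tree_dist a b \<le> lp_dist p (g (tree_dilate sel [] a)) (g (tree_dilate sel [] b))"
      using expand[of "tree_dilate sel [] a" "tree_dilate sel [] b"]
      by (simp add: tree_dist_tree_dilate length_tree_dilate)
  next
    fix a :: "nat list" and i assume "length a < m"
    then have "lp_dist p (g (tree_dilate sel [] a)) (g (tree_dilate sel [] (a @ [i]))) powr p \<le> Q"
      unfolding tree_dilate_snoc by (intro sel) (simp add: length_tree_dilate)
    then have "(lp_dist p (g (tree_dilate sel [] a)) (g (tree_dilate sel [] (a @ [i]))) powr p) powr (1/p)
        \<le> Q powr (1/p)"
      using p by (intro powr_mono2) auto
    then show "lp_dist p (g (tree_dilate sel [] a)) (g (tree_dilate sel [] (a @ [i]))) \<le> Q powr (1/p)"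
      using p lp_dist_nonneg[of p] by (simp add: powr_powr)
  qed
  then show "\<exists>g'. tree_lp_bounds p m (2 * s) (Q powr (1/p)) g'" by blast
qed

lemma tree_lp_bounds_pow2:
  assumes p: "1 < p"
  shows "tree_lp_bounds p (2 ^ k) s L g \<Longrightarrow> 0 < s \<Longrightarrow> fork_const p * k \<le> (L / s) powr p - 1"
proof (induction k arbitrary: s L g)
  case 0
  then have "1 \<le> L / s" using tree_lp_bounds_le[OF 0(1)] by simp
  then show ?case using p by (simp add: ge_one_powr_ge_zero)
next
  case (Suc k)
  define Q where "Q = (2 * L) powr p - fork_const p * (2 * s) powr p"
  have L: "s \<le> L" using tree_lp_bounds_le[OF Suc(2)] by simp
  have g: "tree_lp_bounds p (2 * 2 ^ k) s L g" using Suc(2) by simp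
  obtain g' where "tree_lp_bounds p (2 ^ k) (2 * s) (Q powr (1/p)) g'"
    using tree_lp_bounds_halve(2)[OF p Suc(3) _ g] unfolding Q_def by auto
  then have IH: "fork_const p * k \<le> (Q powr (1/p) / (2 * s)) powr p - 1"
    using Suc.IH Suc(3) by simp
  have "(Q powr (1/p) / (2 * s)) powr p = Q / (2 * s) powr p"
    using tree_lp_bounds_halve(1)[OF p Suc(3) _ g] Suc(3) p unfolding Q_def
    by (simp add: powr_divide powr_powr)
  also have "\<dots> = (L / s) powr p - fork_const p"
    unfolding Q_def using Suc(3) L by (simp add: diff_divide_distrib powr_divide[symmetric])
  finally show ?case using IH by (simp add: algebra_simps)
qed

lemma tree_lp_embedding_lower:
  assumes p: "1 < p" and h: "2 \<le> h" and D: "0 < D"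
    and f: "\<And>a. a \<in> tree_vertices h \<Longrightarrow> f a \<in> lp_space p"
    and upper: "\<And>a b. a \<in> tree_vertices h \<Longrightarrow> b \<in> tree_vertices h \<Longrightarrow> a \<noteq> b
      \<Longrightarrow> lp_dist p (f a) (f b) \<le> L * tree_dist a b"
    and lower: "\<And>a b. a \<in> tree_vertices h \<Longrightarrow> b \<in> tree_vertices h \<Longrightarrow> a \<noteq> b
      \<Longrightarrow> tree_dist a b \<le> D * lp_dist p (f a) (f b)"
  shows "fork_const p / (2 * ln 2) * ln (real h) \<le> (L * D) powr p"
proof -
  have "tree_lp_bounds p h (1 / D) L f"
    unfolding tree_lp_bounds_def
  proof (intro conjI ballI allI impI)
    fix a b assume ab: "a \<in> tree_vertices h" "b \<in> tree_vertices h"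
    show "1 / D * tree_dist a b \<le> lp_dist p (f a) (f b)"
    proof (cases "a = b")
      case False
      then have "tree_dist a b \<le> lp_dist p (f a) (f b) * D"
        using lower[OF ab] by (simp add: mult.commute)
      then show ?thesis using D by (simp add: pos_divide_le_eq)
    qed simp
  next
    fix a :: "nat list" and i assume "length a < h"
    then show "lp_dist p (f a) (f (a @ [i])) \<le> L"
      using upper[of a "a @ [i]"] by (simp add: tree_vertices_def tree_dist_snoc)
  qed (use f in auto)
  then have "tree_lp_bounds p (2 ^ floor_log h) (1 / D) L f"
    by (rule tree_lp_bounds_mono) (use floor_log_exp2_le[of h] h in auto)
  from tree_lp_bounds_pow2[OF p this] D
  have "fork_const p * floor_log h \<le> (L * D) powr p - 1" by simp
  moreover have "ln (real h) / (2 * ln 2) \<le> real (floor_log h)"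
    using ln_floor_log_bounds(1)[OF h] by (simp add: pos_divide_le_eq mult.commute)
  then have "fork_const p * (ln (real h) / (2 * ln 2)) \<le> fork_const p * floor_log h"
    using fork_const_pos[OF p] by (intro mult_left_mono) auto
  ultimately show ?thesis by simp
qed

lemma tree_lp_distortion_ge:
  assumes p: "1 < p" and h: "2 \<le> h"
  shows "ereal ((fork_const p / (2 * ln 2)) powr (1/p) * ln (real h) powr (1/p))
    \<le> distortion (tree_vertices h) tree_dist (lp_space p) (lp_dist p)"
proof (rule distortion_ge)
  show "[] \<in> tree_vertices h" "[0] \<in> tree_vertices h" "[] \<noteq> [0]"
    using h by (auto simp: tree_vertices_def)
  show "0 < tree_dist a b" if "a \<noteq> b" for a b
    using tree_dist_ge_1[OF that] by simp
  show "0 < lp_dist p x y" if "x \<in> lp_space p" "y \<in> lp_space p" "x \<noteq> y" for x y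
    using p that by (intro lp_dist_pos) auto
next
  fix f L D
  assume f: "f ` tree_vertices h \<subseteq> lp_space p" and D: "0 < D"
    and upper: "\<And>a b. a \<in> tree_vertices h \<Longrightarrow> b \<in> tree_vertices h \<Longrightarrow> a \<noteq> b
      \<Longrightarrow> lp_dist p (f a) (f b) \<le> L * tree_dist a b"
    and lower: "\<And>a b. a \<in> tree_vertices h \<Longrightarrow> b \<in> tree_vertices h \<Longrightarrow> a \<noteq> b
      \<Longrightarrow> tree_dist a b \<le> D * lp_dist p (f a) (f b)"
  have "0 \<le> L"
    using upper[of "[]" "[0]"] lp_dist_nonneg[of p "f []" "f [0]"] h
    by (simp add: tree_vertices_def tree_dist_def)
  have "fork_const p / (2 * ln 2) * ln (real h) \<le> (L * D) powr p"
    using f by (intro tree_lp_embedding_lower[OF p h D _ upper lower]) auto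
  then have "(fork_const p / (2 * ln 2) * ln (real h)) powr (1/p) \<le> ((L * D) powr p) powr (1/p)"
    using p h fork_const_pos[OF p] by (intro powr_mono2) auto
  also have "\<dots> = L * D"
    using p \<open>0 \<le> L\<close> D by (simp add: powr_powr)
  also have "(fork_const p / (2 * ln 2) * ln (real h)) powr (1/p)
      = (fork_const p / (2 * ln 2)) powr (1/p) * ln (real h) powr (1/p)"
    using h fork_const_pos[OF p] by (intro powr_mult)
  finally show "(fork_const p / (2 * ln 2)) powr (1/p) * ln (real h) powr (1/p) \<le> L * D" .
qed

section \<open>The upper bound: Bourgain's embedding\<close>

lemma lp_dist_take_le:
  assumes p: "1 \<le> p" and g: "\<And>a. length a \<le> h \<Longrightarrow> g a \<in> lp_space p"
    and edge: "\<And>a i. length a < h \<Longrightarrow> lp_dist p (g a) (g (a @ [i])) \<le> L"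
  shows "length a \<le> h \<Longrightarrow> n \<le> length a \<Longrightarrow> lp_dist p (g (take n a)) (g a) \<le> L * real (length a - n)"
proof (induction a arbitrary: n rule: rev_induct)
  case (snoc i a)
  show ?case
  proof (cases "n = length a + 1")
    case False
    then have n: "n \<le> length a" using snoc by simp
    have "lp_dist p (g (take n (a @ [i]))) (g (a @ [i])) \<le> lp_dist p (g (take n a)) (g a) + lp_dist p (g a) (g (a @ [i]))"
      using n snoc.prems by (simp, intro lp_dist_triangle[OF p] g) auto
    also have "\<dots> \<le> L * real (length a - n) + L"
      using snoc.IH[OF _ n] snoc.prems edge[of a i] by (intro add_mono) auto
    finally show ?thesis using n by (simp add: algebra_simps of_nat_diff)
  qed simp
qed simp

lemma tree_lp_lipschitz:
  assumes p: "1 \<le> p" and g: "\<And>a. length a \<le> h \<Longrightarrow> g a \<in> lp_space p"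
    and edge: "\<And>a i. length a < h \<Longrightarrow> lp_dist p (g a) (g (a @ [i])) \<le> L"
    and a: "length a \<le> h" and b: "length b \<le> h"
  shows "lp_dist p (g a) (g b) \<le> L * tree_dist a b"
proof -
  define c where "c = lcp a b"
  have c: "c \<le> length a" "c \<le> length b" unfolding c_def by (rule lcp_le_length)+
  have "lp_dist p (g a) (g b) \<le> lp_dist p (g (take c a)) (g a) + lp_dist p (g (take c a)) (g b)"
    using lp_dist_triangle[OF p, of "g a" "g (take c a)" "g b"] a b
    by (simp add: g lp_dist_commute[of p "g a"])
  also have "lp_dist p (g (take c a)) (g a) \<le> L * real (length a - c)"
    by (rule lp_dist_take_le[OF p g edge a c(1)])
  also have "lp_dist p (g (take c a)) (g b) \<le> L * real (length b - c)"
    using lp_dist_take_le[OF p g edge b c(2)] take_lcp[of a b] by (simp add: c_def)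
  also have "L * real (length a - c) + L * real (length b - c) = L * tree_dist a b"
    unfolding tree_dist_def c_def[symmetric] using c by (simp add: algebra_simps of_nat_diff)
  finally show ?thesis by simp
qed

definition coord_encode :: "nat \<times> nat list \<Rightarrow> nat" where
  "coord_encode x = prod_encode (fst x, list_encode (snd x))"

definition coord_decode :: "nat \<Rightarrow> nat \<times> nat list" where
  "coord_decode n = (fst (prod_decode n), list_decode (snd (prod_decode n)))"

lemma coord_decode_encode [simp]: "coord_decode (coord_encode x) = x"
  unfolding coord_encode_def coord_decode_def by simp

lemma coord_encode_decode [simp]: "coord_encode (coord_decode n) = n"
  unfolding coord_encode_def coord_decode_def by simp

lemma inj_coord_encode: "inj_on coord_encode A"
  by (metis coord_decode_encode inj_on_inverseI)

lemma sums_coord_decode: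
  fixes G :: "nat \<times> nat list \<Rightarrow> real"
  assumes "finite S" and "\<And>x. x \<notin> S \<Longrightarrow> G x = 0"
  shows "(\<lambda>n. G (coord_decode n)) sums (\<Sum>x\<in>S. G x)"
proof -
  have "(\<lambda>n. G (coord_decode n)) sums (\<Sum>n\<in>coord_encode ` S. G (coord_decode n))"
  proof (rule sums_finite)
    fix n assume "n \<notin> coord_encode ` S"
    then have "coord_decode n \<notin> S" by (metis coord_encode_decode image_eqI)
    then show "G (coord_decode n) = 0" using assms by simp
  qed (use assms in simp)
  also have "(\<Sum>n\<in>coord_encode ` S. G (coord_decode n)) = (\<Sum>x\<in>S. G x)"
    by (simp add: sum.reindex[OF inj_coord_encode])
  finally show ?thesis .
qed

text \<open>The coordinates of \<open>\<ell>\<^sub>p\<close> are indexed by the pairs \<open>(k, w)\<close> of a scale and a prefix,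
  through the bijection \<open>coord_encode\<close>.\<close>
definition tree_coord :: "real \<Rightarrow> nat \<Rightarrow> nat list \<Rightarrow> nat \<times> nat list \<Rightarrow> real" where
  "tree_coord p K a x = (if fst x \<le> K \<and> snd x \<noteq> [] \<and> take (length (snd x)) a = snd x
     then real (min (length a - length (snd x) + 1) (2 ^ fst x)) / (2 ^ fst x) powr (1/p) else 0)"

definition tree_to_lp :: "real \<Rightarrow> nat \<Rightarrow> nat list \<Rightarrow> nat \<Rightarrow> real" where
  "tree_to_lp p K a n = tree_coord p K a (coord_decode n)"

definition tree_coord_support :: "nat \<Rightarrow> nat list \<Rightarrow> (nat \<times> nat list) set" where
  "tree_coord_support K a = {..K} \<times> ((\<lambda>j. take j a) ` {1..length a})"

lemma finite_tree_coord_support: "finite (tree_coord_support K a)"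
  unfolding tree_coord_support_def by simp

lemma tree_coord_support_snoc: "tree_coord_support K a \<subseteq> tree_coord_support K (a @ [i])"
  unfolding tree_coord_support_def by (force simp: image_iff)

lemma tree_coord_eq_0: "x \<notin> tree_coord_support K a \<Longrightarrow> tree_coord p K a x = 0"
proof (rule ccontr)
  assume x: "x \<notin> tree_coord_support K a" and "tree_coord p K a x \<noteq> 0"
  obtain k w where kw: "x = (k, w)" by (cases x)
  with \<open>tree_coord p K a x \<noteq> 0\<close> have "k \<le> K" "w \<noteq> []" "take (length w) a = w"
    unfolding tree_coord_def by (auto split: if_splits)
  then have "length w \<in> {1..length a}" "w = take (length w) a"
    by (auto simp: Suc_le_eq dest: arg_cong[of _ _ length])
  with x \<open>k \<le> K\<close> show False unfolding kw tree_coord_support_def by blast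
qed

lemma tree_to_lp_sums:
  "(\<lambda>n. \<bar>tree_to_lp p K a n - tree_to_lp p K b n\<bar> powr p)
     sums (\<Sum>x\<in>tree_coord_support K a \<union> tree_coord_support K b. \<bar>tree_coord p K a x - tree_coord p K b x\<bar> powr p)"
  unfolding tree_to_lp_def
  by (rule sums_coord_decode[where G = "\<lambda>x. \<bar>tree_coord p K a x - tree_coord p K b x\<bar> powr p"])
     (auto simp: finite_tree_coord_support tree_coord_eq_0)

lemma tree_coord_Nil: "tree_coord p K [] x = 0"
  unfolding tree_coord_def by auto

lemma tree_to_lp_in_lp_space: "tree_to_lp p K a \<in> lp_space p"
  using sums_summable[OF tree_to_lp_sums[of p K a "[]"]]
  by (simp add: lp_space_def tree_to_lp_def tree_coord_Nil)

lemma lp_dist_tree_to_lp: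
  "lp_dist p (tree_to_lp p K a) (tree_to_lp p K b)
    = (\<Sum>x\<in>tree_coord_support K a \<union> tree_coord_support K b.
         \<bar>tree_coord p K a x - tree_coord p K b x\<bar> powr p) powr (1/p)"
  unfolding lp_dist_def using tree_to_lp_sums by (simp add: sums_iff)

lemma tree_coord_prefix:
  assumes "j \<in> {1..length a}" "k \<le> K"
  shows "tree_coord p K a (k, take j a) = real (min (length a - j + 1) (2 ^ k)) / (2 ^ k) powr (1/p)"
  using assms unfolding tree_coord_def by (auto simp: min_def)

lemma tree_coord_prefix_snoc:
  assumes "j \<in> {1..length a + 1}" "k \<le> K"
  shows "tree_coord p K a (k, take j (a @ [i])) = real (min (length a + 1 - j) (2 ^ k)) / (2 ^ k) powr (1/p)"
proof (cases "j \<le> length a")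
  case True
  then show ?thesis using assms unfolding tree_coord_def by (auto simp: min_def)
next
  case False
  with assms have "j = length a + 1" by simp
  then show ?thesis unfolding tree_coord_def by auto
qed

lemma truncated_step_powr:
  assumes "0 < p"
  shows "\<bar>real (min n (2 ^ k)) / (2 ^ k) powr (1/p) - real (min (n + 1) (2 ^ k)) / (2 ^ k) powr (1/p)\<bar> powr p
    = (if n < 2 ^ k then 1 / 2 ^ k else 0)"
proof (cases "n < 2 ^ k")
  case True
  then have "\<bar>real (min n (2 ^ k)) / (2 ^ k) powr (1/p) - real (min (n + 1) (2 ^ k)) / (2 ^ k) powr (1/p)\<bar>
      = 1 / (2 ^ k) powr (1/p)" by (simp add: diff_divide_distrib[symmetric])
  also have "(1 / (2 ^ k) powr (1/p)) powr p = 1 / 2 ^ k"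
    using assms by (simp add: powr_divide powr_powr)
  finally show ?thesis using True by simp
qed (simp add: min_def)

lemma sum_truncated_steps_le:
  fixes n k :: nat
  shows "(\<Sum>j\<in>{1..n}. if n - j < 2 ^ k then 1 / 2 ^ k else 0) \<le> (1::real)"
proof -
  have "card {j \<in> {1..n}. n - j < 2 ^ k} \<le> card {n + 1 - 2 ^ k..n}" by (intro card_mono) auto
  then have card: "card {j \<in> {1..n}. n - j < 2 ^ k} \<le> 2 ^ k" by simp
  have "(\<Sum>j\<in>{1..n}. if n - j < 2 ^ k then 1 / 2 ^ k else 0)
      = (\<Sum>j\<in>{j \<in> {1..n}. n - j < 2 ^ k}. (1 / 2 ^ k :: real))"
    by (rule sum.inter_filter[symmetric]) simp
  also have "\<dots> = real (card {j \<in> {1..n}. n - j < 2 ^ k}) * (1 / 2 ^ k)"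
    by simp
  also have "\<dots> \<le> real ((2::nat) ^ k) * (1 / 2 ^ k)"
    using card by (intro mult_right_mono) auto
  finally show ?thesis by simp
qed

text \<open>Along an edge, every scale contributes at most 1 to the \<open>p\<close>-th power of the distance.\<close>
lemma tree_to_lp_edge:
  assumes p: "0 < p"
  shows "lp_dist p (tree_to_lp p K a) (tree_to_lp p K (a @ [i])) \<le> real (K + 1) powr (1/p)"
proof -
  define b where "b = a @ [i]"
  define G where "G x = \<bar>tree_coord p K a x - tree_coord p K b x\<bar> powr p" for x
  have inj: "inj_on (\<lambda>j. take j b) {1..length b}"
    by (rule inj_onI) (auto dest: arg_cong[of _ _ length])
  have "tree_coord_support K a \<union> tree_coord_support K b = tree_coord_support K b"
    using tree_coord_support_snoc[of K a i] unfolding b_def by blast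
  then have "(\<Sum>x\<in>tree_coord_support K a \<union> tree_coord_support K b. G x)
      = (\<Sum>x\<in>tree_coord_support K b. G x)" by simp
  also have "\<dots> = (\<Sum>k\<in>{..K}. \<Sum>w\<in>(\<lambda>j. take j b) ` {1..length b}. G (k, w))"
    unfolding tree_coord_support_def sum.cartesian_product by (simp add: case_prod_beta)
  also have "\<dots> = (\<Sum>k\<in>{..K}. \<Sum>j\<in>{1..length b}. G (k, take j b))"
    by (rule sum.cong[OF refl], subst sum.reindex[OF inj], simp add: o_def)
  also have "\<dots> = (\<Sum>k\<in>{..K}. \<Sum>j\<in>{1..length b}. (if length b - j < 2 ^ k then 1 / 2 ^ k else 0))"
  proof (intro sum.cong refl)
    fix k j assume k: "k \<in> {..K}" and j: "j \<in> {1..length b}"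
    have "tree_coord p K a (k, take j b) = real (min (length b - j) (2 ^ k)) / (2 ^ k) powr (1/p)"
      unfolding b_def using j k by (subst tree_coord_prefix_snoc) (auto simp: b_def)
    moreover have "tree_coord p K b (k, take j b) = real (min (length b - j + 1) (2 ^ k)) / (2 ^ k) powr (1/p)"
      using j k by (intro tree_coord_prefix) auto
    ultimately have "G (k, take j b) = \<bar>real (min (length b - j) (2 ^ k)) / (2 ^ k) powr (1/p)
        - real (min (length b - j + 1) (2 ^ k)) / (2 ^ k) powr (1/p)\<bar> powr p"
      unfolding G_def by simp
    then show "G (k, take j b) = (if length b - j < 2 ^ k then 1 / 2 ^ k else 0)"
      using truncated_step_powr[OF p] by simp
  qed
  also have "\<dots> \<le> (\<Sum>k\<in>{..K}. 1)"
    by (intro sum_mono sum_truncated_steps_le)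
  finally have "(\<Sum>x\<in>tree_coord_support K a \<union> tree_coord_support K b. G x) \<le> real (K + 1)"
    by simp
  then show ?thesis
    unfolding lp_dist_tree_to_lp b_def[symmetric] G_def[symmetric] using p
    by (intro powr_mono2) (auto simp: G_def intro: sum_nonneg)
qed

lemma tree_coord_deep_prefix:
  assumes "1 \<le> j" "j + 2 ^ k \<le> length a + 1" "k \<le> K"
  shows "tree_coord p K a (k, take j a) = 2 ^ k / (2 ^ k) powr (1/p)"
proof -
  have "(1::nat) \<le> 2 ^ k" by simp
  then have "j \<le> length a" using assms(2) by linarith
  then have "j \<in> {1..length a}" "min (length a - j + 1) (2 ^ k) = 2 ^ k" using assms by auto
  then show ?thesis using tree_coord_prefix[of j a k K p] assms(3) by simp
qed

lemma tree_coord_off_branch: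
  assumes "lcp a b < j" "j \<le> length a"
  shows "tree_coord p K b (k, take j a) = 0"
proof -
  have "take j b \<noteq> take j a"
  proof
    assume "take j b = take j a"
    moreover from arg_cong[OF this, of length] have "j \<le> length b" using assms(2) by simp
    ultimately have "j \<le> lcp a b" using assms(2) by (intro le_lcp_if_take_eq) auto
    with assms(1) show False by simp
  qed
  then show ?thesis using assms(2) unfolding tree_coord_def by auto
qed


text \<open>The \<open>2 ^ k\<close> coordinates \<open>(k, take j a)\<close>, for prefixes strictly below the branching point
  of \<open>a\<close> and \<open>b\<close> and at distance at least \<open>2 ^ k\<close> above \<open>a\<close>, vanish for \<open>b\<close> and are
  saturated for \<open>a\<close>.\<close>
lemma tree_to_lp_dist_ge_scale:
  assumes p: "1 < p" and kK: "k \<le> K" and deep: "lcp a b + 2 * 2 ^ k \<le> length a + 1"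
  shows "2 ^ k \<le> lp_dist p (tree_to_lp p K a) (tree_to_lp p K b)"
proof -
  define c where "c = lcp a b"
  define M :: nat where "M = 2 ^ k"
  define J where "J = {c + 1 .. length a + 1 - M}"
  have deep: "c + 2 * M \<le> length a + 1" and "1 \<le> M" using deep unfolding c_def M_def by simp_all
  have card_J: "M \<le> card J" unfolding J_def using deep by simp
  have J: "1 \<le> j" "j + M \<le> length a + 1" "lcp a b < j" "j \<le> length a" if "j \<in> J" for j
    using that deep \<open>1 \<le> M\<close> unfolding J_def c_def by auto
  define G where "G x = \<bar>tree_coord p K a x - tree_coord p K b x\<bar> powr p" for x
  have G_J: "G (k, take j a) = real M powr (p - 1)" if "j \<in> J" for j
  proof -
    have "G (k, take j a) = (real M / real M powr (1/p)) powr p"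
      unfolding G_def using J[OF that] kK unfolding M_def
      by (simp add: tree_coord_deep_prefix tree_coord_off_branch)
    also have "\<dots> = real M powr (p - 1)"
      using p unfolding M_def by (simp add: powr_divide powr_powr powr_diff)
    finally show ?thesis .
  qed
  have inj: "inj_on (\<lambda>j. (k, take j a)) J"
  proof (rule inj_onI)
    fix x y assume "x \<in> J" "y \<in> J" "(k, take x a) = (k, take y a)"
    then have "length (take x a) = length (take y a)" by simp
    with J(4)[OF \<open>x \<in> J\<close>] J(4)[OF \<open>y \<in> J\<close>] show "x = y" by simp
  qed
  have sub: "(\<lambda>j. (k, take j a)) ` J \<subseteq> tree_coord_support K a \<union> tree_coord_support K b"
    using J kK unfolding tree_coord_support_def by auto
  have "real M powr p = real M * real M powr (p - 1)"
    unfolding M_def by (simp add: powr_mult_base)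
  also have "\<dots> \<le> real (card J) * real M powr (p - 1)"
    using card_J by (intro mult_right_mono) auto
  also have "\<dots> = (\<Sum>x\<in>(\<lambda>j. (k, take j a)) ` J. G x)"
    by (simp add: sum.reindex[OF inj] G_J)
  also have "\<dots> \<le> (\<Sum>x\<in>tree_coord_support K a \<union> tree_coord_support K b. G x)"
    using sub by (intro sum_mono2) (auto simp: finite_tree_coord_support G_def)
  finally have "(real M powr p) powr (1/p) \<le> lp_dist p (tree_to_lp p K a) (tree_to_lp p K b)"
    unfolding lp_dist_tree_to_lp G_def[symmetric] using p by (intro powr_mono2) auto
  then show ?thesis
    using p unfolding M_def by (simp add: powr_powr)
qed

lemma tree_to_lp_lower_deeper:
  assumes p: "1 < p" and ab: "a \<noteq> b" and st: "length b - lcp a b \<le> length a - lcp a b"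
    and K: "length a < 2 ^ (K + 1)"
  shows "tree_dist a b \<le> 8 * lp_dist p (tree_to_lp p K a) (tree_to_lp p K b)"
proof -
  define c where "c = lcp a b"
  have c: "c \<le> length a" "c \<le> length b" unfolding c_def by (rule lcp_le_length)+
  define s where "s = length a - c"
  have "1 \<le> s"
  proof (rule ccontr)
    assume "\<not> 1 \<le> s"
    then have "length a = c" "length b = c" using st c unfolding s_def c_def by auto
    then show False using take_lcp[of a b] ab unfolding c_def by simp
  qed
  \<comment> \<open>the scale \<open>k\<close> with \<open>2 ^ k\<close> about a quarter of the distance\<close>
  define k where "k = floor_log (s + 1) - 1"
  have "1 \<le> floor_log (s + 1)" using floor_log_le_iff[of 2 "s + 1"] \<open>1 \<le> s\<close> floor_log_power[of 1] by simp
  then have "2 * 2 ^ k = (2 ^ floor_log (s + 1) :: nat)" unfolding k_def by (simp flip: power_Suc)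
  then have k: "2 * 2 ^ k \<le> s + 1" "s + 1 < 4 * 2 ^ k"
    using floor_log_exp2_le[of "s + 1"] floor_log_exp2_gt[of "s + 1"] by simp_all
  have "length a < 2 * 2 ^ K" using K by simp
  then have "2 ^ k \<le> (2 ^ K :: nat)" using k c unfolding s_def by linarith
  then have "2 ^ k \<le> lp_dist p (tree_to_lp p K a) (tree_to_lp p K b)"
    using k c unfolding s_def c_def by (intro tree_to_lp_dist_ge_scale[OF p]) auto
  moreover have "tree_dist a b \<le> 2 * real s"
    using st c unfolding tree_dist_def s_def c_def by simp
  moreover have "real (s + 1) < real (4 * 2 ^ k)"
    using k(2) by (simp only: of_nat_less_iff)
  ultimately show ?thesis by simp
qed

lemma tree_to_lp_lower:
  assumes p: "1 < p" and "a \<noteq> b" and "length a \<le> h" and "length b \<le> h" and h: "h < 2 ^ (K + 1)"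
  shows "tree_dist a b \<le> 8 * lp_dist p (tree_to_lp p K a) (tree_to_lp p K b)"
proof (cases "length b - lcp a b \<le> length a - lcp a b")
  case True
  then show ?thesis using tree_to_lp_lower_deeper[OF p \<open>a \<noteq> b\<close>] assms by simp
next
  case False
  then have "tree_dist b a \<le> 8 * lp_dist p (tree_to_lp p K b) (tree_to_lp p K a)"
    using tree_to_lp_lower_deeper[OF p \<open>a \<noteq> b\<close>[symmetric]] assms by (simp add: lcp_commute)
  then show ?thesis by (simp add: tree_dist_commute lp_dist_commute)
qed

lemma tree_lp_distortion_le:
  assumes p: "1 < p" and h: "2 \<le> h"
  shows "distortion (tree_vertices h) tree_dist (lp_space p) (lp_dist p)
    \<le> ereal (8 * (2 / ln 2) powr (1/p) * ln (real h) powr (1/p))"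
proof -
  define K where "K = floor_log h"
  define L where "L = real (K + 1) powr (1/p)"
  define f where "f = tree_to_lp p K"
  have f: "f a \<in> lp_space p" for a unfolding f_def by (rule tree_to_lp_in_lp_space)
  have K: "h < 2 ^ (K + 1)" using floor_log_exp2_gt[of h] unfolding K_def by simp
  have upper: "lp_dist p (f a) (f b) \<le> L * tree_dist a b"
    if "a \<in> tree_vertices h" "b \<in> tree_vertices h" for a b
    using p that unfolding f_def L_def tree_vertices_def
    by (intro tree_lp_lipschitz tree_to_lp_in_lp_space tree_to_lp_edge) auto
  have lower: "tree_dist a b \<le> 8 * lp_dist p (f a) (f b)"
    if "a \<in> tree_vertices h" "b \<in> tree_vertices h" "a \<noteq> b" for a b
    using that K unfolding f_def tree_vertices_def by (intro tree_to_lp_lower[OF p]) auto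
  have pos: "0 < lp_dist p (f a) (f b)"
    if "a \<in> tree_vertices h" "b \<in> tree_vertices h" "a \<noteq> b" for a b
    using lower[OF that] tree_dist_ge_1[OF that(3)] by simp
  have "inj_on f (tree_vertices h)"
    using pos by (intro inj_onI) (metis lp_dist_self less_irrefl)
  then have "distortion (tree_vertices h) tree_dist (lp_space p) (lp_dist p) \<le> ereal (L * 8)"
  proof (rule distortion_le[where a = "[]" and b = "[0]"])
    show "[] \<in> tree_vertices h" "[0] \<in> tree_vertices h" using h by (auto simp: tree_vertices_def)
  qed (use f upper lower pos tree_dist_ge_1 in \<open>auto simp: L_def less_le_trans[OF zero_less_one]\<close>)
  also have "L \<le> (2 / ln 2) powr (1/p) * ln (real h) powr (1/p)"
  proof -
    have "real (K + 1) \<le> 2 / ln 2 * ln (real h)"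
      using ln_floor_log_bounds(2)[OF h] unfolding K_def[symmetric] by (simp add: field_simps)
    then have "L \<le> (2 / ln 2 * ln (real h)) powr (1/p)"
      unfolding L_def using p by (intro powr_mono2) auto
    also have "\<dots> = (2 / ln 2) powr (1/p) * ln (real h) powr (1/p)"
      using h by (intro powr_mult)
    finally show ?thesis .
  qed
  then have "ereal (L * 8) \<le> ereal (8 * (2 / ln 2) powr (1/p) * ln (real h) powr (1/p))"
    by simp
  finally show ?thesis .
qed

theorem mainTheorem5:
  fixes p :: real
  assumes "1 < p"
  shows "\<exists>c1 c2. 0 < c1 \<and> c1 \<le> c2 \<and>
    (\<forall>h::nat. 2 \<le> h \<longrightarrow>
       ereal (c1 * ln (real h) powr (1 / p)) \<le> distortion (tree_vertices h) tree_dist (lp_space p) (lp_dist p) \<and>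
       distortion (tree_vertices h) tree_dist (lp_space p) (lp_dist p) \<le> ereal (c2 * ln (real h) powr (1 / p)))"
proof -
  define c1 where "c1 = (fork_const p / (2 * ln 2)) powr (1/p)"
  define c2 where "c2 = max c1 (8 * (2 / ln 2) powr (1/p))"
  have "0 < c1" unfolding c1_def using fork_const_pos[OF assms] by simp
  moreover have "c1 \<le> c2" unfolding c2_def by simp
  moreover have "ereal (c1 * ln (real h) powr (1 / p)) \<le> distortion (tree_vertices h) tree_dist (lp_space p) (lp_dist p)
    \<and> distortion (tree_vertices h) tree_dist (lp_space p) (lp_dist p) \<le> ereal (c2 * ln (real h) powr (1 / p))"
    if h: "2 \<le> h" for h :: nat
  proof
  show "ereal (c1 * ln (real h) powr (1 / p)) \<le> distortion (tree_vertices h) tree_dist (lp_space p) (lp_dist p)"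
    using tree_lp_distortion_ge[OF assms h] unfolding c1_def .
  have "distortion (tree_vertices h) tree_dist (lp_space p) (lp_dist p)
      \<le> ereal (8 * (2 / ln 2) powr (1/p) * ln (real h) powr (1/p))"
    by (rule tree_lp_distortion_le[OF assms h])
  also have "\<dots> \<le> ereal (c2 * ln (real h) powr (1 / p))"
    unfolding c2_def by (simp add: mult_right_mono)
  finally show "distortion (tree_vertices h) tree_dist (lp_space p) (lp_dist p) \<le> ereal (c2 * ln (real h) powr (1 / p))" .
  qed
  ultimately show ?thesis by blast
qed

end
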